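(* For $n\ge1$, $$U(qt_1,t_2,\ldots,t_n)=-q^{1/2}t_1\cdots t_n\sum_{\pi\in\Pi^\circ_n}(-1)^{n+\ell(\pi)}U^\pi(t_1,\ldots,t_n),$$ as meromorphic functions, where for $\pi=\{\pi_1,\ldots,\pi_\ell\}$, $U^\pi(t)=U\big(\prod_{k\in\pi_1}t_k,\ldots,\prod_{k\in\pi_\ell}t_k\big)$.
   Context: Fix $q$, $0<|q|<1$, with $q^{1/2}$ chosen. With $(a)_\infty=\prod_{j\ge0}(1-aq^j)$, $\Theta(x)=(q)_\infty^{-2}(x^{1/2}-x^{-1/2})(qx)_\infty(q/x)_\infty$ and $\Theta^{(k)}=(x\frac d{dx})^k\Theta$. For $r\ge1$, $$U(t_1,\ldots,t_r)=\sum_{\sigma\in\mathfrak S(r)}\frac{\det\Big(\frac{\Theta^{(j-i+1)}(t_{\sigma(1)}\cdots t_{\sigma(r-j)})}{(j-i+1)!}\Big)_{i,j=1}^r}{\Theta(t_{\sigma(1)})\Theta(t_{\sigma(1)}t_{\sigma(2)})\cdots\Theta(t_{\sigma(1)}\cdots t_{\sigma(r)})},$$ empty products $=1$, $1/(-k)!:=0$ for $k\ge1$, square roots of products being products of square roots (and $(qt_1)^{1/2}=q^{1/2}t_1^{1/2}$); $U$ is symmetric in its arguments. $\Pi^\circ_n$ is the set of set partitions of $\{1,\ldots,n\}$ into nonempty blocks having at most one block of cardinality $>1$, that block (if present) containing $1$; $\ell(\pi)$ is the number of blocks. *)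

theory Defs
  imports "HOL-Analysis.Analysis" "HOL-Library.Disjoint_Sets" "HOL-Combinatorics.Permutations"
    "Jordan_Normal_Form.Determinant"
begin

text \<open>Everything is parametrised by square roots: a variable x of the paper is
  represented by a chosen square root s, x = s^2 (so x^(1/2) = s).  Square roots of
  products are products of square roots, as in the paper.\<close>

definition qpoch_inf :: "complex \<Rightarrow> complex \<Rightarrow> complex" where
  "qpoch_inf q a = (\<Prod>j. 1 - a * q ^ j)"

text \<open>theta q s = Theta(x) with x = s^2, x^(1/2) = s.\<close>
definition theta :: "complex \<Rightarrow> complex \<Rightarrow> complex" where
  "theta q s = (s - 1 / s) * qpoch_inf q (q * s\<^sup>2) * qpoch_inf q (q / s\<^sup>2)
               / (qpoch_inf q q)\<^sup>2"

text \<open>thetaD q k s = Theta^(k)(x) = (x d/dx)^k Theta (x), x = s^2;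
  in the variable s, x d/dx = (s/2) d/ds.\<close>
definition thetaD :: "complex \<Rightarrow> nat \<Rightarrow> complex \<Rightarrow> complex" where
  "thetaD q k = ((\<lambda>f s. s / 2 * deriv f s) ^^ k) (theta q)"

text \<open>U(t_1,...,t_r), given by the list of square roots [s_1,...,s_r] (t_i = s_i^2);
  indices are shifted to start at 0.\<close>
definition U :: "complex \<Rightarrow> complex list \<Rightarrow> complex" where
  "U q xs = (let r = length xs in
     \<Sum>\<sigma> \<in> {\<sigma>. \<sigma> permutes {..<r}}.
       (let P = (\<lambda>m. \<Prod>i<m. xs ! (\<sigma> i)) in
        det (mat r r (\<lambda>(i, j).
               let k = int j - int i + 1 in
               if k < 0 then 0 else thetaD q (nat k) (P (r - (j + 1))) / fact (nat k)))
        / (\<Prod>m\<in>{1..r}. theta q (P m))))"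

text \<open>Pi^circ_n on the index set {0..<n} (element 0 plays the role of 1).\<close>
definition Pi0 :: "nat \<Rightarrow> nat set set set" where
  "Pi0 n = {P. partition_on {..<n} P \<and>
               (\<forall>B\<in>P. \<forall>C\<in>P. card B > 1 \<and> card C > 1 \<longrightarrow> B = C) \<and>
               (\<forall>B\<in>P. card B > 1 \<longrightarrow> 0 \<in> B)}"

text \<open>U^pi(t): U applied to the block products, blocks listed by increasing minimum
  (U is symmetric, so the order is immaterial).\<close>
definition Upi :: "complex \<Rightarrow> nat set set \<Rightarrow> (nat \<Rightarrow> complex) \<Rightarrow> complex" where
  "Upi q P s = U q (map (\<lambda>m. \<Prod>k\<in>(THE B. B \<in> P \<and> Min B = m). s k)
                         (sorted_list_of_set (Min ` P)))"

end

theory Submission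
  imports Defs "HOL-Complex_Analysis.Complex_Analysis" "HOL-Combinatorics.Multiset_Permutations"
begin

text \<open>For every finite family \<open>(t_i)_{i in B}\<close>, with \<open>t_A = prod_{i in A} t_i\<close>, the function \<open>U\<close>
  satisfies the linear relation
    \<open>sum_{A subset B} (-1)^|B - A| Theta^(|B - A|)(t_A) U((t_i)_{i in A}) = 0\<close>:
  expand each Hessenberg determinant along its first column and sum over all orderings, the
  factorials cancelling against the number of orderings with a given initial segment. The summand
  for \<open>A = B\<close> is \<open>Theta(t_B) U(t)\<close>, so the relation determines \<open>U\<close> recursively.
  Now write it for the arguments with \<open>t_1\<close> replaced by \<open>q t_1\<close>. By the quasi-periodicity
  \<open>Theta(q x) = -(q^(1/2) x)^(-1) Theta(x)\<close>, each \<open>Theta^(k)(q t_A)\<close> is a binomial combination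
  of the \<open>Theta^(j)(t_A)\<close>. The alternating sum over \<open>Pi0 n\<close> is indexed by the set \<open>S\<close> of
  variables absorbed into the block of \<open>1\<close>; the relation for these merged families together with
  Moebius inversion in \<open>S\<close> shows that the right-hand side satisfies the same triangular system
  as the left-hand side, whose diagonal coefficient \<open>Theta(q^(1/2) t_B)\<close> is nonzero. Induction on
  the number of arguments concludes.\<close>

section \<open>Sums over subsets\<close>

lemma sum_Pow_insert:
  assumes "finite X" "x \<notin> X"
  shows "(\<Sum>J\<in>Pow (insert x X). f J) = (\<Sum>J\<in>Pow X. f J) + (\<Sum>J\<in>Pow X. f (insert x J))"
proof -
  have "(\<Sum>J\<in>Pow (insert x X). f J) = (\<Sum>J\<in>Pow X. f J) + (\<Sum>J\<in>insert x ` Pow X. f J)"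
    unfolding Pow_insert by (rule sum.union_disjoint) (use assms in auto)
  also have "(\<Sum>J\<in>insert x ` Pow X. f J) = (\<Sum>J\<in>Pow X. f (insert x J))"
    by (rule sum.reindex_cong[where l = "insert x"]) (use assms in \<open>auto simp: inj_on_def\<close>)
  finally show ?thesis .
qed

lemma sum_Pow_insert_complement:
  assumes "finite X" "x \<notin> X"
  shows "(\<Sum>A\<in>Pow (insert x X). f (insert x X - A) A) =
         (\<Sum>K\<in>Pow X. f (insert x (X - K)) K) + (\<Sum>K\<in>Pow X. f (X - K) (insert x K))"
proof -
  have "insert x X - K = insert x (X - K)" "insert x X - insert x K = X - K" if "K \<subseteq> X" for K
    using that assms(2) by auto
  thus ?thesis
    unfolding sum_Pow_insert[OF assms] by (intro arg_cong2[where f = "(+)"] sum.cong refl) simp_all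
qed

lemma sum_Pow_split_pairs:
  assumes "finite X"
  shows "(\<Sum>C\<in>Pow X. \<Sum>A\<in>Pow C. f A (C - A)) = (\<Sum>A\<in>Pow X. \<Sum>B\<in>Pow (X - A). f A B)"
proof -
  have "(\<Sum>C\<in>Pow X. \<Sum>A\<in>Pow C. f A (C - A)) = (\<Sum>(C, A)\<in>Sigma (Pow X) Pow. f A (C - A))"
    using assms by (subst sum.Sigma) (auto intro: finite_subset)
  also have "\<dots> = (\<Sum>(A, B)\<in>Sigma (Pow X) (\<lambda>A. Pow (X - A)). f A B)"
    by (rule sum.reindex_bij_witness[where i = "\<lambda>(A, B). (A \<union> B, A)" and j = "\<lambda>(C, A). (A, C - A)"])
       auto
  also have "\<dots> = (\<Sum>A\<in>Pow X. \<Sum>B\<in>Pow (X - A). f A B)"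
    using assms by (subst sum.Sigma) auto
  finally show ?thesis .
qed

lemma sum_Pow_Pow_diff_swap:
  assumes "finite X"
  shows "(\<Sum>S\<in>Pow X. \<Sum>K\<in>Pow (X - S). g S K) = (\<Sum>K\<in>Pow X. \<Sum>S\<in>Pow (X - K). g S K)"
proof -
  have "(\<Sum>S\<in>Pow X. \<Sum>K\<in>Pow (X - S). g S K) = (\<Sum>(S, K)\<in>Sigma (Pow X) (\<lambda>S. Pow (X - S)). g S K)"
    using assms by (subst sum.Sigma) auto
  also have "\<dots> = (\<Sum>(K, S)\<in>Sigma (Pow X) (\<lambda>K. Pow (X - K)). g S K)"
    by (rule sum.reindex_bij_witness[where i = prod.swap and j = prod.swap]) auto
  also have "\<dots> = (\<Sum>K\<in>Pow X. \<Sum>S\<in>Pow (X - K). g S K)"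
    using assms by (subst sum.Sigma) auto
  finally show ?thesis .
qed

lemma sum_Pow_neg_one_power:
  assumes "finite T"
  shows "(\<Sum>S\<in>Pow T. (-1) ^ card S :: 'a :: comm_ring_1) = (if T = {} then 1 else 0)"
  using assms
proof (induction T rule: finite_induct)
  case (insert x F)
  have "(\<Sum>S\<in>Pow F. (-1) ^ card (insert x S) :: 'a) = - (\<Sum>S\<in>Pow F. (-1) ^ card S)"
    unfolding sum_negf[symmetric]
    by (intro sum.cong refl) (use insert.hyps in \<open>auto simp: card_insert_if finite_subset\<close>)
  thus ?case by (simp add: sum_Pow_insert[OF insert.hyps])
qed simp

lemma sum_Pow_alternating_inversion:
  fixes \<phi> :: "'b set \<Rightarrow> 'a :: comm_ring_1"
  assumes T: "finite T"
  shows "(\<Sum>S\<in>Pow T. (-1) ^ card S * (\<Sum>M\<in>Pow (T - S). \<phi> M)) = \<phi> T"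
proof -
  have "(\<Sum>S\<in>Pow T. (-1) ^ card S * (\<Sum>M\<in>Pow (T - S). \<phi> M)) =
        (\<Sum>S\<in>Pow T. \<Sum>M\<in>Pow (T - S). (-1) ^ card S * \<phi> M)"
    by (simp add: sum_distrib_left)
  also have "\<dots> = (\<Sum>M\<in>Pow T. \<Sum>S\<in>Pow (T - M). (-1) ^ card S * \<phi> M)"
    by (rule sum_Pow_Pow_diff_swap[OF T])
  also have "\<dots> = (\<Sum>M\<in>Pow T. (\<Sum>S\<in>Pow (T - M). (-1) ^ card S) * \<phi> M)"
    by (simp add: sum_distrib_right)
  also have "\<dots> = (\<Sum>M\<in>Pow T. if M = T then \<phi> M else 0)"
    using T by (intro sum.cong refl) (auto simp: sum_Pow_neg_one_power)
  also have "\<dots> = \<phi> T" using T by (simp add: sum.delta')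
  finally show ?thesis .
qed

section \<open>The theta function\<close>

lemma qpoch_inf_has_prod:
  fixes q a :: complex
  assumes "norm q < 1"
  shows "(\<lambda>j. 1 - a * q ^ j) has_prod qpoch_inf q a"
proof -
  have "summable (\<lambda>j. norm a * norm q ^ j)"
    using assms by (intro summable_mult summable_geometric) simp
  hence "abs_convergent_prod (\<lambda>j. 1 - a * q ^ j)"
    by (simp add: abs_convergent_prod_conv_summable norm_mult norm_power)
  thus ?thesis
    unfolding qpoch_inf_def
    by (intro convergent_prod_has_prod abs_convergent_prod_imp_convergent_prod)
qed

lemma qpoch_inf_shift:
  fixes q a :: complex
  assumes "norm q < 1"
  shows "qpoch_inf q a = (1 - a) * qpoch_inf q (a * q)"
proof -
  have "(\<lambda>n. \<Prod>j<n. 1 - a * q ^ Suc j) \<longlonglongrightarrow> qpoch_inf q (a * q)"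
    using has_prod_imp_tendsto'[OF qpoch_inf_has_prod[OF assms, of "a * q"]] by (simp add: mult_ac)
  hence "(\<lambda>n. (1 - a) * (\<Prod>j<n. 1 - a * q ^ Suc j)) \<longlonglongrightarrow> (1 - a) * qpoch_inf q (a * q)"
    by (intro tendsto_mult tendsto_const)
  hence "(\<lambda>n. \<Prod>j<Suc n. 1 - a * q ^ j) \<longlonglongrightarrow> (1 - a) * qpoch_inf q (a * q)"
    by (subst prod.lessThan_Suc_shift) simp
  moreover have "(\<lambda>n. \<Prod>j<Suc n. 1 - a * q ^ j) \<longlonglongrightarrow> qpoch_inf q a"
    using has_prod_imp_tendsto'[OF qpoch_inf_has_prod[OF assms, of a]] by (rule LIMSEQ_Suc)
  ultimately show ?thesis using LIMSEQ_unique by blast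
qed

lemma uniform_limit_qpoch_inf:
  fixes q :: complex
  assumes q: "norm q < 1"
  shows "uniform_limit (cball 0 R) (\<lambda>N a. \<Prod>j<N. 1 - a * q ^ j) (qpoch_inf q) sequentially"
proof -
  have "uniformly_convergent_on (cball 0 R) (\<lambda>N a. \<Prod>j<N. 1 - a * q ^ j)"
  proof (rule uniformly_convergent_on_prod')
    show "uniformly_convergent_on (cball 0 R) (\<lambda>N a. \<Sum>j<N. norm (1 - a * q ^ j - 1))"
    proof (rule Weierstrass_m_test')
      fix n and a :: complex assume "a \<in> cball 0 R"
      thus "norm (norm (1 - a * q ^ n - 1)) \<le> R * norm q ^ n"
        by (simp add: norm_mult norm_power mult_right_mono)
    next
      show "summable (\<lambda>n. R * norm q ^ n)"
        using q by (intro summable_mult summable_geometric) simp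
    qed
  qed (auto intro!: continuous_intros)
  then obtain g where g: "uniform_limit (cball 0 R) (\<lambda>N a. \<Prod>j<N. 1 - a * q ^ j) g sequentially"
    by (auto simp: uniformly_convergent_on_def)
  moreover have "g a = qpoch_inf q a" if "a \<in> cball 0 R" for a
    using tendsto_uniform_limitI[OF g that] has_prod_imp_tendsto'[OF qpoch_inf_has_prod[OF q]]
    by (rule LIMSEQ_unique)
  ultimately show ?thesis
    by (metis (no_types, lifting) uniform_limit_cong')
qed

lemma holomorphic_qpoch_inf:
  fixes q :: complex
  assumes "norm q < 1"
  shows "qpoch_inf q holomorphic_on A"
proof (rule holomorphic_on_subset[of _ UNIV])
  show "qpoch_inf q holomorphic_on UNIV"
  proof (rule holomorphic_uniform_sequence[where f = "\<lambda>N a. \<Prod>j<N. 1 - a * q ^ j"])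
    fix z :: complex
    have "uniform_limit (cball z 1) (\<lambda>N a. \<Prod>j<N. 1 - a * q ^ j) (qpoch_inf q) sequentially"
      by (rule uniform_limit_on_subset[OF uniform_limit_qpoch_inf[OF assms, of "norm z + 1"]])
         (simp add: cball_subset_cball_iff)
    thus "\<exists>d>0. cball z d \<subseteq> UNIV \<and>
            uniform_limit (cball z d) (\<lambda>N a. \<Prod>j<N. 1 - a * q ^ j) (qpoch_inf q) sequentially"
      by (intro exI[of _ 1]) auto
  qed (auto intro!: holomorphic_intros)
qed simp

lemma holomorphic_on_qpoch_inf_compose:
  fixes q :: complex
  assumes "norm q < 1" "f holomorphic_on A"
  shows "(\<lambda>x. qpoch_inf q (f x)) holomorphic_on A"
  using holomorphic_on_compose[OF assms(2) holomorphic_qpoch_inf[OF assms(1)]] by (simp add: o_def)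

lemma holomorphic_theta:
  fixes q :: complex
  assumes "norm q < 1"
  shows "theta q holomorphic_on - {0}"
  unfolding theta_def[abs_def]
  by (intro holomorphic_intros holomorphic_on_qpoch_inf_compose[OF assms]) auto

lemma theta_1 [simp]: "theta q 1 = 0"
  by (simp add: theta_def)

lemma theta_quasi_periodic:
  fixes q qh s :: complex
  assumes q: "norm q < 1" "q \<noteq> 0" and qh: "qh\<^sup>2 = q" and s: "s \<noteq> 0"
  shows "theta q (qh * s) = - (1 / (qh * s\<^sup>2)) * theta q s"
proof -
  let ?E = "qpoch_inf q"
  have qh0: "qh \<noteq> 0" using q qh by auto
  have sq: "(qh * s)\<^sup>2 = q * s\<^sup>2" using qh by (simp add: power_mult_distrib)
  have E1: "?E (q * s\<^sup>2) = (1 - q * s\<^sup>2) * ?E (q * (qh * s)\<^sup>2)"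
    unfolding sq using qpoch_inf_shift[OF q(1), of "q * s\<^sup>2"] by (simp add: mult_ac)
  have "q / (qh * s)\<^sup>2 = 1 / s\<^sup>2" unfolding sq using q s by (simp add: field_simps)
  hence E2: "?E (q / (qh * s)\<^sup>2) = (1 - 1 / s\<^sup>2) * ?E (q / s\<^sup>2)"
    using qpoch_inf_shift[OF q(1), of "1 / s\<^sup>2"] by simp
  have prefactor: "qh * s - 1 / (qh * s) = - (1 - q * s\<^sup>2) / (qh * s)"
    using qh qh0 s by (simp add: field_simps power2_eq_square)
  have rearrange: "- X / (qh * s) * a * ((1 - 1 / s\<^sup>2) * b) / c =
      - (1 / (qh * s\<^sup>2)) * ((s - 1 / s) * (X * a) * b / c)" for X a b c :: complex
    using qh0 s by (simp add: field_simps power2_eq_square)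
  have "theta q (qh * s) = - (1 - q * s\<^sup>2) / (qh * s) * ?E (q * (qh * s)\<^sup>2) *
           ((1 - 1 / s\<^sup>2) * ?E (q / s\<^sup>2)) / (?E q)\<^sup>2"
    unfolding theta_def E2 prefactor ..
  also have "\<dots> = - (1 / (qh * s\<^sup>2)) *
      ((s - 1 / s) * ((1 - q * s\<^sup>2) * ?E (q * (qh * s)\<^sup>2)) * ?E (q / s\<^sup>2) / (?E q)\<^sup>2)"
    by (rule rearrange)
  also have "\<dots> = - (1 / (qh * s\<^sup>2)) * theta q s"
    unfolding theta_def E1 ..
  finally show ?thesis .
qed

lemma thetaD_0 [simp]: "thetaD q 0 = theta q"
  by (simp add: thetaD_def)

lemma thetaD_Suc: "thetaD q (Suc k) s = s / 2 * deriv (thetaD q k) s"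
  by (simp add: thetaD_def)

lemma holomorphic_thetaD:
  fixes q :: complex
  assumes "norm q < 1"
  shows "thetaD q k holomorphic_on - {0}"
proof (induction k)
  case 0
  thus ?case using holomorphic_theta[OF assms] by simp
next
  case (Suc k)
  have "thetaD q (Suc k) = (\<lambda>s. s / 2 * deriv (thetaD q k) s)"
    by (simp add: thetaD_Suc fun_eq_iff)
  thus ?case by (auto intro!: holomorphic_intros Suc)
qed

lemma thetaD_has_field_derivative:
  fixes q :: complex
  assumes "norm q < 1" "z \<noteq> 0"
  shows "(thetaD q k has_field_derivative (2 / z * thetaD q (Suc k) z)) (at z)"
proof -
  have "(thetaD q k has_field_derivative deriv (thetaD q k) z) (at z)"
    by (rule holomorphic_derivI[OF holomorphic_thetaD[OF assms(1)]]) (use assms in auto)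
  thus ?thesis using assms(2) by (simp add: thetaD_Suc)
qed

text \<open>The operator \<open>x d/dx\<close> commutes with the rescaling \<open>x \<mapsto> c^2 x\<close>.\<close>
lemma thetaD_Suc_rescaled:
  fixes q c s :: complex
  assumes q: "norm q < 1" and c: "c \<noteq> 0" and s: "s \<noteq> 0"
    and g: "\<And>z. z \<noteq> 0 \<Longrightarrow> thetaD q k (c * z) = g z"
  shows "thetaD q (Suc k) (c * s) = s / 2 * deriv g s"
proof -
  have "((\<lambda>z. thetaD q k (c * z)) has_field_derivative
          2 / (c * s) * thetaD q (Suc k) (c * s) * c) (at s)"
    using DERIV_chain2[OF thetaD_has_field_derivative[OF q, of "c * s" k] DERIV_cmult_Id[of c s]] c s
    by simp
  moreover have "eventually (\<lambda>z. z \<in> - {0}) (nhds s)"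
    using s by (intro eventually_nhds_in_open) auto
  hence "eventually (\<lambda>z. thetaD q k (c * z) = g z) (nhds s)"
    by eventually_elim (use g in auto)
  ultimately have "deriv g s = 2 / (c * s) * thetaD q (Suc k) (c * s) * c"
    by (metis DERIV_imp_deriv deriv_cong_ev)
  thus ?thesis using c s by (simp add: field_simps)
qed

text \<open>In the paper's notation \<open>Theta^(k)(q x) = -(q^(1/2) x)^(-1) (D - 1)^k Theta(x)\<close> with
  \<open>D = x d/dx\<close>, because \<open>D (x^(-1) f) = x^(-1) (D - 1) f\<close>; the subsets \<open>J\<close> of the \<open>k\<close>-element
  set \<open>X\<close> expand \<open>(D - 1)^k\<close>.\<close>
lemma thetaD_quasi_periodic:
  fixes q qh s :: complex
  assumes q: "norm q < 1" "q \<noteq> 0" and qh: "qh\<^sup>2 = q" and X: "finite X" and s: "s \<noteq> 0"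
  shows "thetaD q (card X) (qh * s) =
           - (1 / (qh * s\<^sup>2)) * ((-1) ^ card X * (\<Sum>J\<in>Pow X. (-1) ^ card J * thetaD q (card J) s))"
  using X s
proof (induction X arbitrary: s rule: finite_induct)
  case empty
  thus ?case using theta_quasi_periodic[OF q qh] by simp
next
  case (insert x X)
  have qh0: "qh \<noteq> 0" using q qh by auto
  define S where "S = (\<lambda>z. \<Sum>J\<in>Pow X. (-1) ^ card J * thetaD q (card J) z)"
  define S' where "S' = (\<lambda>z. \<Sum>J\<in>Pow X. (-1) ^ card J * (2 / z * thetaD q (Suc (card J)) z))"
  define g where "g = (\<lambda>z. - (1 / (qh * z\<^sup>2)) * ((-1) ^ card X * S z))"
  have "(S has_field_derivative S' s) (at s)"
    unfolding S_def S'_def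
    by (intro DERIV_sum DERIV_cmult thetaD_has_field_derivative q insert.prems)
  hence "(g has_field_derivative
           2 / (qh * s ^ 3) * ((-1) ^ card X * S s) - 1 / (qh * s\<^sup>2) * ((-1) ^ card X * S' s)) (at s)"
    unfolding g_def using qh0 insert.prems
    by (auto intro!: derivative_eq_intros simp: field_simps power2_eq_square power3_eq_cube)
  hence "thetaD q (Suc (card X)) (qh * s) =
           s / 2 * (2 / (qh * s ^ 3) * ((-1) ^ card X * S s) - 1 / (qh * s\<^sup>2) * ((-1) ^ card X * S' s))"
    using thetaD_Suc_rescaled[OF q(1) qh0 insert.prems, of "card X" g] insert.IH
    by (simp add: g_def S_def DERIV_imp_deriv)
  also have "\<dots> = - (1 / (qh * s\<^sup>2)) * ((-1) ^ Suc (card X) * (S s - s / 2 * S' s))"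
    using insert.prems qh0 by (simp add: field_simps power2_eq_square power3_eq_cube)
  also have "s / 2 * S' s = (\<Sum>J\<in>Pow X. (-1) ^ card J * thetaD q (Suc (card J)) s)"
    unfolding S'_def sum_distrib_left using insert.prems by (intro sum.cong refl) (simp add: field_simps)
  also have "\<dots> = - (\<Sum>J\<in>Pow X. (-1) ^ card (insert x J) * thetaD q (card (insert x J)) s)"
    unfolding sum_negf[symmetric] using insert.hyps
    by (intro sum.cong refl) (auto simp: card_insert_if finite_subset)
  also have "S s - \<dots> = (\<Sum>J\<in>Pow (insert x X). (-1) ^ card J * thetaD q (card J) s)"
    unfolding S_def sum_Pow_insert[OF insert.hyps] by simp
  finally show ?case using insert.hyps by simp
qed

lemma thetaD_quasi_periodic_sum:
  fixes q qh t R :: complex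
  assumes q: "norm q < 1" "q \<noteq> 0" and qh: "qh\<^sup>2 = q" and X: "finite X" and t: "t \<noteq> 0"
  shows "(-1) ^ card X * thetaD q (card X) (qh * t) * (- (qh * t\<^sup>2) * R) =
         (\<Sum>J\<in>Pow X. (-1) ^ card J * thetaD q (card J) t * R)"
proof -
  have qh0: "qh \<noteq> 0" using q qh by auto
  have "(-1) ^ card X * thetaD q (card X) (qh * t) * (- (qh * t\<^sup>2) * R) =
        ((-1) ^ card X * (-1) ^ card X) * (\<Sum>J\<in>Pow X. (-1) ^ card J * thetaD q (card J) t) * R"
    unfolding thetaD_quasi_periodic[OF q qh X t] using qh0 t by (simp add: field_simps)
  also have "(-1) ^ card X * (-1) ^ card X = (1 :: complex)"
    by (simp flip: power_add mult_2)
  finally show ?thesis by (simp add: sum_distrib_right)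
qed

section \<open>Hessenberg determinants\<close>

text \<open>For \<open>l = 0\<close> this is the matrix in the definition of \<open>U\<close>, with entry \<open>c (j - i + 1) (P (m - j - 1))\<close>;
  a general \<open>l\<close> shifts the first row, which is what its Laplace expansion along the first column
  produces.\<close>
definition hess_mat :: "(nat \<Rightarrow> complex \<Rightarrow> complex) \<Rightarrow> (nat \<Rightarrow> complex) \<Rightarrow> nat \<Rightarrow> nat \<Rightarrow> complex mat" where
  "hess_mat c P m l = mat m m (\<lambda>(i, j). if i = 0 then c (l + j + 1) (P (m - (j + 1)))
      else (let k = int j - int i + 1 in if k < 0 then 0 else c (nat k) (P (m - (j + 1)))))"

lemma hess_mat_carrier: "hess_mat c P m l \<in> carrier_mat m m"
  by (simp add: hess_mat_def)

lemma det_hess_mat_Suc: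
  assumes c0: "c 0 (P 0) = 0"
  shows "det (hess_mat c P (Suc m) l) = c (l + 1) (P m) * det (hess_mat c P m 0) - c 0 (P m) * det (hess_mat c P m (l + 1))"
proof (cases m)
  case 0
  have "det (hess_mat c P 1 l) = (\<Sum>i<1. hess_mat c P 1 l $$ (i, 0) * cofactor (hess_mat c P 1 l) i 0)"
    by (rule laplace_expansion_column[OF hess_mat_carrier]) simp
  also have "\<dots> = c (l + 1) (P 0)"
    by (simp add: hess_mat_def cofactor_def mat_delete_def)
  finally show ?thesis using 0 c0 by (simp add: hess_mat_def)
next
  case (Suc m')
  let ?A = "hess_mat c P (Suc m) l"
  have "det ?A = (\<Sum>i<Suc m. ?A $$ (i, 0) * cofactor ?A i 0)"
    by (rule laplace_expansion_column[OF hess_mat_carrier]) simp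
  also have "\<dots> = (\<Sum>i<2. ?A $$ (i, 0) * cofactor ?A i 0)"
  proof (rule sum.mono_neutral_right)
    show "\<forall>i\<in>{..<Suc m} - {..<2}. ?A $$ (i, 0) * cofactor ?A i 0 = 0"
      by (auto simp: hess_mat_def)
  qed (use Suc in auto)
  also have "\<dots> = ?A $$ (0, 0) * cofactor ?A 0 0 + ?A $$ (1, 0) * cofactor ?A 1 0"
    by (simp add: numeral_2_eq_2)
  finally have dA: "det ?A = ?A $$ (0, 0) * cofactor ?A 0 0 + ?A $$ (1, 0) * cofactor ?A 1 0" .
  have d1: "mat_delete ?A 0 0 = hess_mat c P m 0"
  proof (rule eq_matI)
    fix i j assume "i < dim_row (hess_mat c P m 0)" "j < dim_col (hess_mat c P m 0)"
    moreover have "nat (1 + int j) = Suc j" by simp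
    ultimately show "mat_delete ?A 0 0 $$ (i, j) = hess_mat c P m 0 $$ (i, j)"
      by (auto simp: hess_mat_def mat_delete_def Let_def) (simp add: algebra_simps)
  qed (auto simp: hess_mat_def mat_delete_def)
  have d2: "mat_delete ?A 1 0 = hess_mat c P m (l + 1)"
    by (rule eq_matI) (auto simp: hess_mat_def mat_delete_def Let_def)
  show ?thesis
    unfolding dA cofactor_def d1 d2 using Suc by (simp add: hess_mat_def)
qed

lemma det_hess_mat_expansion:
  assumes c0: "c 0 (P 0) = 0"
  shows "det (hess_mat c P (Suc m) l) = (\<Sum>b<Suc m. (-1) ^ b * c (l + b + 1) (P (m - b)) *
            (\<Prod>i<b. c 0 (P (m - i))) * det (hess_mat c P (m - b) 0))"
proof (induction m arbitrary: l)
  case 0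
  show ?case using det_hess_mat_Suc[where c=c and P=P, OF c0, of 0 l] c0 by simp
next
  case (Suc m)
  have "det (hess_mat c P (Suc (Suc m)) l) = c (l + 1) (P (Suc m)) * det (hess_mat c P (Suc m) 0) -
          c 0 (P (Suc m)) * det (hess_mat c P (Suc m) (l + 1))"
    by (rule det_hess_mat_Suc[where c=c and P=P, OF c0])
  also have "det (hess_mat c P (Suc m) (l + 1)) = (\<Sum>b<Suc m. (-1) ^ b * c (l + 1 + b + 1) (P (m - b)) *
            (\<Prod>i<b. c 0 (P (m - i))) * det (hess_mat c P (m - b) 0))"
    by (rule Suc.IH)
  also have "c (l + 1) (P (Suc m)) * det (hess_mat c P (Suc m) 0) - c 0 (P (Suc m)) * \<dots> =
     (\<Sum>b<Suc (Suc m). (-1) ^ b * c (l + b + 1) (P (Suc m - b)) *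
            (\<Prod>i<b. c 0 (P (Suc m - i))) * det (hess_mat c P (Suc m - b) 0))"
    unfolding sum.lessThan_Suc_shift[of _ "Suc m"] prod.lessThan_Suc_shift
    by (simp add: sum_distrib_left sum_negf[symmetric] algebra_simps)
  finally show ?case .
qed

lemma prod_atLeastAtMost_split_top:
  fixes b m :: nat
  assumes "b \<le> m"
  shows "(\<Prod>j\<in>{1..m}. f j) = (\<Prod>j\<in>{1..m-b}. f j) * (\<Prod>i<b. f (m - i))"
  using assms
proof (induction b)
  case 0 thus ?case by simp
next
  case (Suc b)
  have "(\<Prod>j\<in>{1..m-b}. f j) = (\<Prod>j\<in>{1..m-Suc b}. f j) * f (m - b)"
  proof -
    have "{1..m-b} = insert (m - b) {1..m - Suc b}" using Suc.prems by auto
    moreover have "m - b \<notin> {1..m - Suc b}" by auto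
    ultimately show ?thesis by (simp add: mult.commute)
  qed
  thus ?case using Suc by (simp add: mult_ac)
qed

definition hess_ratio :: "(nat \<Rightarrow> complex \<Rightarrow> complex) \<Rightarrow> (nat \<Rightarrow> complex) \<Rightarrow> nat \<Rightarrow> complex" where
  "hess_ratio c P r = det (hess_mat c P r 0) / (\<Prod>m\<in>{1..r}. c 0 (P m))"

lemma hess_ratio_recurrence:
  assumes c0: "c 0 (P 0) = 0" and nz: "\<And>j. j \<in> {1..Suc m} \<Longrightarrow> c 0 (P j) \<noteq> 0"
  shows "c 0 (P (Suc m)) * hess_ratio c P (Suc m) = (\<Sum>b<Suc m. (-1) ^ b * c (b + 1) (P (m - b)) * hess_ratio c P (m - b))"
proof -
  define Q where "Q = (\<lambda>k. \<Prod>j\<in>{1..k}. c 0 (P j))"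
  have QS: "Q (Suc m) = c 0 (P (Suc m)) * Q m"
    unfolding Q_def by (simp add: atLeastAtMostSuc_conv mult.commute)
  have Qsplit: "Q m = Q (m - b) * (\<Prod>i<b. c 0 (P (m - i)))" if "b \<le> m" for b
    unfolding Q_def by (rule prod_atLeastAtMost_split_top[OF that])
  have Qnz: "Q k \<noteq> 0" if "k \<le> Suc m" for k
    unfolding Q_def using nz that by (auto simp: prod_zero_iff)
  have "c 0 (P (Suc m)) * hess_ratio c P (Suc m) = det (hess_mat c P (Suc m) 0) / Q m"
    using QS nz[of "Suc m"] unfolding hess_ratio_def Q_def by simp
  also have "\<dots> = (\<Sum>b<Suc m. (-1) ^ b * c (b + 1) (P (m - b)) *
            (\<Prod>i<b. c 0 (P (m - i))) * det (hess_mat c P (m - b) 0) / Q m)"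
    unfolding det_hess_mat_expansion[where c=c and P=P, OF c0] sum_divide_distrib by simp
  also have "\<dots> = (\<Sum>b<Suc m. (-1) ^ b * c (b + 1) (P (m - b)) * hess_ratio c P (m - b))"
  proof (intro sum.cong refl)
    fix b assume b: "b \<in> {..<Suc m}"
    hence "Q m = Q (m - b) * (\<Prod>i<b. c 0 (P (m - i)))" by (intro Qsplit) auto
    moreover have "Q (m - b) \<noteq> 0" "(\<Prod>i<b. c 0 (P (m - i))) \<noteq> 0"
      using Qnz[of "m - b"] Qnz[of m] \<open>Q m = _\<close> by auto
    ultimately show "(-1) ^ b * c (b + 1) (P (m - b)) * (\<Prod>i<b. c 0 (P (m - i))) * det (hess_mat c P (m - b) 0) / Q m
        = (-1) ^ b * c (b + 1) (P (m - b)) * hess_ratio c P (m - b)"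
      unfolding hess_ratio_def by (simp add: field_simps Q_def)
  qed
  finally show ?thesis .
qed

lemma hess_ratio_cong:
  assumes "\<And>j. j \<le> r \<Longrightarrow> P j = P' j"
  shows "hess_ratio c P r = hess_ratio c P' r"
proof -
  have "hess_mat c P r 0 = hess_mat c P' r 0"
    unfolding hess_mat_def using assms by (intro eq_matI) (auto simp: Let_def)
  moreover have "(\<Prod>m\<in>{1..r}. c 0 (P m)) = (\<Prod>m\<in>{1..r}. c 0 (P' m))"
    using assms by (intro prod.cong) auto
  ultimately show ?thesis by (simp add: hess_ratio_def)
qed

section \<open>\<open>U\<close> as a sum over orderings\<close>

definition theta_coeff :: "complex \<Rightarrow> nat \<Rightarrow> complex \<Rightarrow> complex" where
  "theta_coeff q k x = thetaD q k x / fact k"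

text \<open>\<open>Uterm q vs\<close> is the summand of \<open>U q vs\<close> for the identity permutation, so \<open>U\<close> sums
  \<open>Uterm\<close> over all orderings of its arguments; \<open>Uset q w B\<close> is \<open>U\<close> evaluated at the family
  \<open>(w i)_{i in B}\<close>.\<close>
definition Uterm :: "complex \<Rightarrow> complex list \<Rightarrow> complex" where
  "Uterm q vs = hess_ratio (theta_coeff q) (\<lambda>m. prod_list (take m vs)) (length vs)"

definition Uset :: "complex \<Rightarrow> (nat \<Rightarrow> complex) \<Rightarrow> nat set \<Rightarrow> complex" where
  "Uset q w B = (\<Sum>ys\<in>permutations_of_set B. Uterm q (map w ys))"

lemma theta_coeff_0 [simp]: "theta_coeff q 0 = theta q"
  by (simp add: theta_coeff_def fun_eq_iff)

lemma thetaD_eq_fact_theta_coeff: "thetaD q k x = of_nat (fact k) * theta_coeff q k x"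
  by (simp add: theta_coeff_def)

lemma mat_U_eq_hess_mat:
  "mat r r (\<lambda>(i, j). let k = int j - int i + 1 in
      if k < 0 then 0 else thetaD q (nat k) (P (r - (j + 1))) / fact (nat k)) =
   hess_mat (theta_coeff q) P r 0" (is "?M = ?H")
proof (rule eq_matI)
  fix i j assume "i < dim_row ?H" "j < dim_col ?H"
  moreover have "nat (int j + 1) = j + 1" by simp
  ultimately show "?M $$ (i, j) = ?H $$ (i, j)"
    by (auto simp: hess_mat_def Let_def theta_coeff_def)
qed (auto simp: hess_mat_def)

lemma sum_permutes_eq_sum_permutations_of_set:
  "(\<Sum>\<sigma>\<in>{\<sigma>. \<sigma> permutes {..<r}}. f (map \<sigma> [0..<r])) = (\<Sum>ys\<in>permutations_of_set {..<r}. f ys)"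
proof (rule sum.reindex_bij_witness[where i = "\<lambda>ys i. if i < r then ys ! i else i"
                                      and j = "\<lambda>\<sigma>. map \<sigma> [0..<r]"])
  fix \<sigma> assume "\<sigma> \<in> {\<sigma>. \<sigma> permutes {..<r}}"
  hence \<sigma>: "\<sigma> permutes {..<r}" by simp
  show "(\<lambda>i. if i < r then map \<sigma> [0..<r] ! i else i) = \<sigma>"
    using permutes_not_in[OF \<sigma>] by (auto simp: fun_eq_iff)
  have "set (map \<sigma> [0..<r]) = {..<r}"
    using permutes_image[OF \<sigma>] by (simp add: atLeast0LessThan)
  moreover have "distinct (map \<sigma> [0..<r])"
    using permutes_inj_on[OF \<sigma>] by (simp add: distinct_map)
  ultimately show "map \<sigma> [0..<r] \<in> permutations_of_set {..<r}" by (rule permutations_of_setI)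
next
  fix ys assume ys: "ys \<in> permutations_of_set {..<r}"
  have len: "length ys = r" using length_finite_permutations_of_set[OF ys] by simp
  show "map (\<lambda>i. if i < r then ys ! i else i) [0..<r] = ys"
    using len by (simp add: list_eq_iff_nth_eq)
  have "bij_betw ((!) ys) {..<r} {..<r}"
    using permutations_of_setD[OF ys] len by (intro bij_betw_nth) auto
  hence "bij_betw (\<lambda>i. if i < r then ys ! i else i) {..<r} {..<r}"
    by (rule bij_betw_cong[THEN iffD1, rotated]) simp
  hence "(\<lambda>i. if i < r then ys ! i else i) permutes {..<r}"
    by (rule bij_imp_permutes) simp
  thus "(\<lambda>i. if i < r then ys ! i else i) \<in> {\<sigma>. \<sigma> permutes {..<r}}" by simp
qed simp

lemma U_eq_Uset: "U q xs = Uset q (\<lambda>i. xs ! i) {..<length xs}"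
proof -
  let ?r = "length xs"
  have "U q xs = (\<Sum>\<sigma>\<in>{\<sigma>. \<sigma> permutes {..<?r}}.
                    hess_ratio (theta_coeff q) (\<lambda>m. \<Prod>i<m. xs ! \<sigma> i) ?r)"
    by (simp add: U_def hess_ratio_def mat_U_eq_hess_mat[symmetric] Let_def)
  also have "\<dots> = (\<Sum>\<sigma>\<in>{\<sigma>. \<sigma> permutes {..<?r}}. Uterm q (map ((!) xs) (map \<sigma> [0..<?r])))"
  proof -
    have prefix_prod: "(\<Prod>i<j. xs ! \<sigma> i) = prod_list (take j (map ((!) xs) (map \<sigma> [0..<?r])))"
      if "j \<le> ?r" for \<sigma> j
    proof -
      have "take j (map ((!) xs) (map \<sigma> [0..<?r])) = map (\<lambda>i. xs ! \<sigma> i) [0..<j]"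
        using that by (simp add: take_map min_def)
      thus ?thesis by (simp add: prod.distinct_set_conv_list[symmetric] atLeast0LessThan)
    qed
    show ?thesis
      unfolding Uterm_def length_map length_upt diff_zero
      by (intro sum.cong refl hess_ratio_cong) (simp only: prefix_prod)
  qed
  also have "\<dots> = Uset q (\<lambda>i. xs ! i) {..<?r}"
    unfolding Uset_def by (rule sum_permutes_eq_sum_permutations_of_set)
  finally show ?thesis .
qed

lemma U_map_distinct_eq_Uset:
  assumes "distinct L"
  shows "U q (map g L) = Uset q g (set L)"
proof -
  let ?n = "length L"
  have inj: "inj_on ((!) L) {..<?n}"
    using assms by (simp add: inj_on_def nth_eq_iff_index_eq)
  have "U q (map g L) = (\<Sum>ys\<in>permutations_of_set {..<?n}. Uterm q (map g (map ((!) L) ys)))"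
    unfolding U_eq_Uset Uset_def
    by (intro sum.cong refl arg_cong[where f = "Uterm q"]) (auto dest: permutations_of_setD)
  also have "\<dots> = (\<Sum>zs\<in>map ((!) L) ` permutations_of_set {..<?n}. Uterm q (map g zs))"
  proof (rule sum.reindex[symmetric, unfolded o_def], rule inj_onI)
    fix xs ys assume "xs \<in> permutations_of_set {..<?n}" "ys \<in> permutations_of_set {..<?n}"
      and eq: "map ((!) L) xs = map ((!) L) ys"
    hence "set xs \<union> set ys \<subseteq> {..<?n}" by (auto dest: permutations_of_setD)
    thus "xs = ys"
      using inj_on_map_eq_map[of "(!) L" xs ys] inj_on_subset[OF inj] eq by blast
  qed
  also have "map ((!) L) ` permutations_of_set {..<?n} = permutations_of_set (set L)"
  proof -
    have "(!) L ` {..<?n} = set L" by (auto simp: in_set_conv_nth)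
    thus ?thesis using permutations_of_set_image_inj[OF inj] by simp
  qed
  finally show ?thesis unfolding Uset_def .
qed

lemma Uset_cong:
  assumes "\<And>i. i \<in> B \<Longrightarrow> w i = w' i"
  shows "Uset q w B = Uset q w' B"
  unfolding Uset_def using assms
  by (intro sum.cong refl arg_cong[where f = "Uterm q"] map_cong) (auto dest: permutations_of_setD)

lemma Uset_empty [simp]: "Uset q w {} = 1"
  by (simp add: Uset_def Uterm_def hess_ratio_def hess_mat_def)

lemma prod_list_map_permutation:
  assumes "ys \<in> permutations_of_set A"
  shows "prod_list (map w ys) = (\<Prod>i\<in>A. w i)"
  using permutations_of_setD[OF assms] prod.distinct_set_conv_list[of ys w] by simp

lemma bij_betw_append_permutations_of_set:
  assumes "finite B" "A \<subseteq> B"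
  shows "bij_betw (\<lambda>(zs, us). zs @ us) (permutations_of_set A \<times> permutations_of_set (B - A))
           {ys \<in> permutations_of_set B. set (take (card A) ys) = A}"
proof (rule bij_betw_byWitness[where f' = "\<lambda>ys. (take (card A) ys, drop (card A) ys)"])
  have "length zs = card A" if "zs \<in> permutations_of_set A" for zs
    using that assms by (auto simp: finite_subset dest: length_finite_permutations_of_set)
  thus "\<forall>p\<in>permutations_of_set A \<times> permutations_of_set (B - A).
          (\<lambda>ys. (take (card A) ys, drop (card A) ys)) ((\<lambda>(zs, us). zs @ us) p) = p"
    by auto
  show "\<forall>ys\<in>{ys \<in> permutations_of_set B. set (take (card A) ys) = A}.
          (\<lambda>(zs, us). zs @ us) (take (card A) ys, drop (card A) ys) = ys"
    by simp
  show "(\<lambda>(zs, us). zs @ us) ` (permutations_of_set A \<times> permutations_of_set (B - A))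
          \<subseteq> {ys \<in> permutations_of_set B. set (take (card A) ys) = A}"
  proof clarify
    fix zs us assume zs: "zs \<in> permutations_of_set A" and us: "us \<in> permutations_of_set (B - A)"
    have "set zs = A" "distinct zs" "set us = B - A" "distinct us"
      using permutations_of_setD[OF zs] permutations_of_setD[OF us] by auto
    moreover from this have "length zs = card A" by (metis distinct_card)
    ultimately show "zs @ us \<in> permutations_of_set B \<and> set (take (card A) (zs @ us)) = A"
      using assms(2) by (auto simp: permutations_of_set_def)
  qed
  show "(\<lambda>ys. (take (card A) ys, drop (card A) ys)) ` {ys \<in> permutations_of_set B. set (take (card A) ys) = A}
          \<subseteq> permutations_of_set A \<times> permutations_of_set (B - A)"
  proof (rule image_subsetI)
    fix ys assume "ys \<in> {ys \<in> permutations_of_set B. set (take (card A) ys) = A}"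
    hence ys: "ys \<in> permutations_of_set B" "A = set (take (card A) ys)" by auto
    have "set ys = B" "distinct ys" using permutations_of_setD[OF ys(1)] by auto
    moreover have "set (take (card A) ys) \<inter> set (drop (card A) ys) = {}"
      using \<open>distinct ys\<close> by (metis append_take_drop_id distinct_append)
    moreover have "set ys = set (take (card A) ys) \<union> set (drop (card A) ys)"
      by (metis append_take_drop_id set_append)
    ultimately show "(take (card A) ys, drop (card A) ys) \<in>
                       permutations_of_set A \<times> permutations_of_set (B - A)"
      using ys(2) by (auto simp: permutations_of_set_def)
  qed
qed

lemma sum_permutations_of_set_take:
  assumes B: "finite B" and a: "a \<le> card B"
  shows "(\<Sum>ys\<in>permutations_of_set B. h (take a ys)) =
         of_nat (fact (card B - a)) * (\<Sum>A | A \<subseteq> B \<and> card A = a. \<Sum>zs\<in>permutations_of_set A. h zs)"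
proof -
  let ?AA = "{A. A \<subseteq> B \<and> card A = a}"
  have fin: "finite ?AA" using B by (auto intro: finite_subset[of _ "Pow B"])
  have "set (take a ys) \<in> ?AA" if ys: "ys \<in> permutations_of_set B" for ys
    using permutations_of_setD[OF ys] length_finite_permutations_of_set[OF ys] a set_take_subset[of a ys]
    by (auto simp: distinct_card)
  hence "(\<Sum>ys\<in>permutations_of_set B. h (take a ys)) =
        (\<Sum>A\<in>?AA. \<Sum>ys | ys \<in> permutations_of_set B \<and> set (take a ys) = A. h (take a ys))"
    by (intro sum.group[symmetric] finite_permutations_of_set fin) auto
  also have "\<dots> = (\<Sum>A\<in>?AA. of_nat (fact (card B - a)) * (\<Sum>zs\<in>permutations_of_set A. h zs))"
  proof (rule sum.cong[OF refl])
    fix A assume A: "A \<in> ?AA"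
    hence AB: "A \<subseteq> B" "card A = a" by auto
    have "(\<Sum>ys | ys \<in> permutations_of_set B \<and> set (take a ys) = A. h (take a ys)) =
          (\<Sum>(zs, us)\<in>permutations_of_set A \<times> permutations_of_set (B - A). h (take a (zs @ us)))"
      using sum.reindex_bij_betw[OF bij_betw_append_permutations_of_set[OF B AB(1)], of "\<lambda>ys. h (take a ys)"]
      by (simp add: AB(2) case_prod_unfold)
    also have "\<dots> = (\<Sum>zs\<in>permutations_of_set A. \<Sum>us\<in>permutations_of_set (B - A). h zs)"
      using AB B by (subst sum.cartesian_product) (auto intro!: sum.cong
          simp: finite_subset dest: length_finite_permutations_of_set)
    also have "\<dots> = of_nat (fact (card B - a)) * (\<Sum>zs\<in>permutations_of_set A. h zs)"
      using AB B by (simp add: card_Diff_subset finite_subset sum_distrib_left)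
    finally show "(\<Sum>ys | ys \<in> permutations_of_set B \<and> set (take a ys) = A. h (take a ys)) =
          of_nat (fact (card B - a)) * (\<Sum>zs\<in>permutations_of_set A. h zs)" .
  qed
  finally show ?thesis by (simp add: sum_distrib_left)
qed

lemma sum_proper_subsets_by_card:
  assumes "finite B"
  shows "(\<Sum>A\<in>Pow B - {B}. f (card (B - A)) A) =
         (\<Sum>b<card B. \<Sum>A | A \<subseteq> B \<and> card A = card B - 1 - b. f (b + 1) A)"
proof -
  have img: "card ` (Pow B - {B}) \<subseteq> {..<card B}"
    using assms by (auto intro!: psubset_card_mono)
  have "(\<Sum>A\<in>Pow B - {B}. f (card (B - A)) A) =
        (\<Sum>k<card B. \<Sum>A | A \<in> Pow B - {B} \<and> card A = k. f (card (B - A)) A)"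
    by (rule sum.group[symmetric]) (use assms img in auto)
  also have "\<dots> = (\<Sum>b<card B. \<Sum>A | A \<in> Pow B - {B} \<and> card A = card B - Suc b. f (card (B - A)) A)"
    by (rule sum.nat_diff_reindex[symmetric])
  also have "\<dots> = (\<Sum>b<card B. \<Sum>A | A \<subseteq> B \<and> card A = card B - 1 - b. f (b + 1) A)"
  proof (intro sum.cong)
    fix b assume b: "b \<in> {..<card B}"
    show "{A. A \<in> Pow B - {B} \<and> card A = card B - Suc b} = {A. A \<subseteq> B \<and> card A = card B - 1 - b}"
      using b by auto
    fix A assume "A \<in> {A. A \<subseteq> B \<and> card A = card B - 1 - b}"
    hence "card (B - A) = b + 1"
      using b assms by (auto simp: card_Diff_subset finite_subset)
    thus "f (card (B - A)) A = f (b + 1) A" by simp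
  qed simp
  finally show ?thesis .
qed

lemma Uterm_recurrence:
  assumes ne: "vs \<noteq> []"
    and nz: "\<And>j. j \<in> {1..length vs} \<Longrightarrow> theta q (prod_list (take j vs)) \<noteq> 0"
  shows "theta q (prod_list vs) * Uterm q vs =
    (\<Sum>b<length vs. (-1) ^ b * theta_coeff q (b + 1) (prod_list (take (length vs - 1 - b) vs)) *
        Uterm q (take (length vs - 1 - b) vs))"
proof -
  obtain m where m: "length vs = Suc m" using ne by (cases vs) auto
  define P where "P = (\<lambda>j. prod_list (take j vs))"
  have "theta q (prod_list vs) * Uterm q vs =
        theta_coeff q 0 (P (Suc m)) * hess_ratio (theta_coeff q) P (Suc m)"
    by (simp add: P_def Uterm_def m)
  also have "\<dots> = (\<Sum>b<Suc m. (-1) ^ b * theta_coeff q (b + 1) (P (m - b)) *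
                     hess_ratio (theta_coeff q) P (m - b))"
    by (rule hess_ratio_recurrence) (use nz m in \<open>simp_all add: P_def\<close>)
  also have "\<dots> = (\<Sum>b<length vs. (-1) ^ b * theta_coeff q (b + 1) (prod_list (take (length vs - 1 - b) vs)) *
        Uterm q (take (length vs - 1 - b) vs))"
  proof (rule sum.cong)
    fix b assume "b \<in> {..<length vs}"
    have "hess_ratio (theta_coeff q) P (m - b) = Uterm q (take (m - b) vs)"
      unfolding Uterm_def using m by (auto intro!: hess_ratio_cong simp: P_def min_def)
    thus "(-1) ^ b * theta_coeff q (b + 1) (P (m - b)) * hess_ratio (theta_coeff q) P (m - b) =
          (-1) ^ b * theta_coeff q (b + 1) (prod_list (take (length vs - 1 - b) vs)) *
            Uterm q (take (length vs - 1 - b) vs)"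
      using m by (simp add: P_def)
  qed (simp add: m)
  finally show ?thesis .
qed

lemma Uterm_permutation_recurrence:
  assumes ys: "ys \<in> permutations_of_set B" and B: "B \<noteq> {}"
    and nz: "\<And>A. A \<subseteq> B \<Longrightarrow> A \<noteq> {} \<Longrightarrow> theta q (\<Prod>i\<in>A. w i) \<noteq> 0"
  shows "theta q (\<Prod>i\<in>B. w i) * Uterm q (map w ys) =
    (\<Sum>b<card B. (-1) ^ b * (theta_coeff q (b + 1) (prod_list (map w (take (card B - 1 - b) ys))) *
                               Uterm q (map w (take (card B - 1 - b) ys))))"
proof -
  have d: "set ys = B" "distinct ys" "length ys = card B"
    using permutations_of_setD[OF ys] length_finite_permutations_of_set[OF ys] by auto
  have "theta q (prod_list (map w ys)) * Uterm q (map w ys) =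
    (\<Sum>b<length (map w ys). (-1) ^ b * theta_coeff q (b + 1) (prod_list (take (length (map w ys) - 1 - b) (map w ys))) *
      Uterm q (take (length (map w ys) - 1 - b) (map w ys)))"
  proof (rule Uterm_recurrence)
    show "map w ys \<noteq> []" using d B by auto
    fix j assume "j \<in> {1..length (map w ys)}"
    hence "take j ys \<noteq> []" using d by (auto simp: take_eq_Nil)
    hence "set (take j ys) \<noteq> {}" by simp
    moreover have "set (take j ys) \<subseteq> B" using d set_take_subset by metis
    moreover have "prod_list (take j (map w ys)) = (\<Prod>i\<in>set (take j ys). w i)"
      using d by (simp add: take_map prod.distinct_set_conv_list)
    ultimately show "theta q (prod_list (take j (map w ys))) \<noteq> 0"
      using nz by presburger
  qed
  thus ?thesis using d by (simp add: take_map mult.assoc prod_list_map_permutation[OF ys])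
qed

text \<open>Grouping the orderings of \<open>B\<close> by the set of their first \<open>a\<close> entries produces the factor
  \<open>(card B - a)!\<close>, which cancels the \<open>1/k!\<close> in \<open>theta_coeff\<close>.\<close>
lemma Uset_recurrence:
  assumes B: "finite B" "B \<noteq> {}"
    and nz: "\<And>A. A \<subseteq> B \<Longrightarrow> A \<noteq> {} \<Longrightarrow> theta q (\<Prod>i\<in>A. w i) \<noteq> 0"
  shows "theta q (\<Prod>i\<in>B. w i) * Uset q w B =
    (\<Sum>A\<in>Pow B - {B}. (-1) ^ (card (B - A) - 1) * thetaD q (card (B - A)) (\<Prod>i\<in>A. w i) * Uset q w A)"
proof -
  define r where "r = card B"
  define h where "h = (\<lambda>b zs. theta_coeff q (b + 1) (prod_list (map w zs)) * Uterm q (map w zs))"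
  have "theta q (\<Prod>i\<in>B. w i) * Uset q w B =
        (\<Sum>b<r. (-1) ^ b * (\<Sum>ys\<in>permutations_of_set B. h b (take (r - 1 - b) ys)))"
    unfolding Uset_def sum_distrib_left r_def h_def
    by (simp add: Uterm_permutation_recurrence[OF _ B(2) nz] sum_distrib_left
             flip: sum.swap[where A = "permutations_of_set B"])
  also have "\<dots> = (\<Sum>b<r. (-1) ^ b * (of_nat (fact (b + 1)) *
      (\<Sum>A | A \<subseteq> B \<and> card A = r - 1 - b. \<Sum>zs\<in>permutations_of_set A. h b zs)))"
    by (intro sum.cong refl arg_cong2[where f = "(*)"])
       (auto simp: r_def Suc_diff_Suc sum_permutations_of_set_take[OF B(1)])
  also have "\<dots> = (\<Sum>b<r. \<Sum>A | A \<subseteq> B \<and> card A = r - 1 - b.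
                     (-1) ^ b * thetaD q (b + 1) (\<Prod>i\<in>A. w i) * Uset q w A)"
  proof (intro sum.cong refl)
    fix b
    have "(\<Sum>zs\<in>permutations_of_set A. h b zs) = theta_coeff q (b + 1) (\<Prod>i\<in>A. w i) * Uset q w A" for A
      unfolding Uset_def h_def sum_distrib_left
      by (intro sum.cong refl) (simp add: prod_list_map_permutation)
    thus "(-1) ^ b * (of_nat (fact (b + 1)) *
            (\<Sum>A | A \<subseteq> B \<and> card A = r - 1 - b. \<Sum>zs\<in>permutations_of_set A. h b zs)) =
          (\<Sum>A | A \<subseteq> B \<and> card A = r - 1 - b. (-1) ^ b * thetaD q (b + 1) (\<Prod>i\<in>A. w i) * Uset q w A)"
      unfolding thetaD_eq_fact_theta_coeff[of q "b + 1"] by (simp add: sum_distrib_left mult_ac)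
  qed
  also have "\<dots> = (\<Sum>A\<in>Pow B - {B}. (-1) ^ (card (B - A) - 1) * thetaD q (card (B - A)) (\<Prod>i\<in>A. w i) * Uset q w A)"
    using sum_proper_subsets_by_card[OF B(1), of "\<lambda>k A. (-1) ^ (k - 1) * thetaD q k (\<Prod>i\<in>A. w i) * Uset q w A"]
    by (simp add: r_def)
  finally show ?thesis .
qed

lemma Uset_relation:
  assumes B: "finite B"
    and nz: "\<And>A. A \<subseteq> B \<Longrightarrow> A \<noteq> {} \<Longrightarrow> theta q (\<Prod>i\<in>A. w i) \<noteq> 0"
  shows "(\<Sum>A\<in>Pow B. (-1) ^ card (B - A) * thetaD q (card (B - A)) (\<Prod>i\<in>A. w i) * Uset q w A) = 0"
proof (cases "B = {}")
  case False
  have "(\<Sum>A\<in>Pow B. (-1) ^ card (B - A) * thetaD q (card (B - A)) (\<Prod>i\<in>A. w i) * Uset q w A) =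
     theta q (\<Prod>i\<in>B. w i) * Uset q w B +
     (\<Sum>A\<in>Pow B - {B}. (-1) ^ card (B - A) * thetaD q (card (B - A)) (\<Prod>i\<in>A. w i) * Uset q w A)"
    by (subst sum.remove[of _ B]) (use B in auto)
  also have "theta q (\<Prod>i\<in>B. w i) * Uset q w B =
    (\<Sum>A\<in>Pow B - {B}. (-1) ^ (card (B - A) - 1) * thetaD q (card (B - A)) (\<Prod>i\<in>A. w i) * Uset q w A)"
    by (rule Uset_recurrence[OF B False nz])
  also have "\<dots> = - (\<Sum>A\<in>Pow B - {B}. (-1) ^ card (B - A) * thetaD q (card (B - A)) (\<Prod>i\<in>A. w i) * Uset q w A)"
    unfolding sum_negf[symmetric]
  proof (intro sum.cong refl)
    fix A assume "A \<in> Pow B - {B}"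
    hence "card (B - A) \<noteq> 0" using B by (auto simp: card_eq_0_iff)
    then obtain k where k: "card (B - A) = Suc k" using not0_implies_Suc by blast
    show "(-1) ^ (card (B - A) - 1) * thetaD q (card (B - A)) (\<Prod>i\<in>A. w i) * Uset q w A =
      - ((-1) ^ card (B - A) * thetaD q (card (B - A)) (\<Prod>i\<in>A. w i) * Uset q w A)"
      unfolding k by simp
  qed
  finally show ?thesis by simp
qed simp

section \<open>Shifting one argument by \<open>q\<close>\<close>

text \<open>\<open>absorb0 s S\<close> merges the variables indexed by \<open>S\<close> into the one indexed by \<open>0\<close>:
  on \<open>I - S\<close> it lists the block products of the partition of \<open>I\<close> with block \<open>{0} \<union> S\<close> and
  singletons otherwise, so \<open>Upi_sum q s I\<close> is the alternating sum over \<open>Pi0\<close> in the theorem.\<close>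
definition absorb0 :: "(nat \<Rightarrow> complex) \<Rightarrow> nat set \<Rightarrow> nat \<Rightarrow> complex" where
  "absorb0 s S = s(0 := s 0 * prod s S)"

definition Upi_sum :: "complex \<Rightarrow> (nat \<Rightarrow> complex) \<Rightarrow> nat set \<Rightarrow> complex" where
  "Upi_sum q s I = (\<Sum>S\<in>Pow (I - {0}). (-1) ^ card S * Uset q (absorb0 s S) (I - S))"

lemma prod_absorb0:
  assumes "finite K" "finite S" "0 \<notin> S" "S \<inter> K = {}"
  shows "prod (absorb0 s S) K = (if 0 \<in> K then prod s (K \<union> S) else prod s K)"
proof (cases "0 \<in> K")
  case True
  have "prod (absorb0 s S) K = absorb0 s S 0 * prod (absorb0 s S) (K - {0})"
    by (rule prod.remove[OF assms(1) True])
  also have "absorb0 s S 0 = s 0 * prod s S"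
    by (simp add: absorb0_def)
  also have "prod (absorb0 s S) (K - {0}) = prod s (K - {0})"
    by (intro prod.cong) (auto simp: absorb0_def)
  also have "s 0 * prod s S * prod s (K - {0}) = prod s K * prod s S"
    using prod.remove[OF assms(1) True, of s] by (simp add: mult_ac)
  also have "\<dots> = prod s (K \<union> S)"
    by (rule prod.union_disjoint[symmetric]) (use assms in auto)
  finally show ?thesis using True by simp
next
  case False
  thus ?thesis by (auto simp: absorb0_def intro!: prod.cong)
qed

lemma Upi_sum_insert_0:
  assumes "0 \<notin> A"
  shows "Upi_sum q s (insert 0 A) = (\<Sum>S\<in>Pow A. (-1) ^ card S * Uset q (absorb0 s S) (insert 0 (A - S)))"
  unfolding Upi_sum_def using assms
  by (intro sum.cong arg_cong2[where f = "(*)"] arg_cong[where f = "Uset q _"]) auto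

lemma prod_absorb0_insert_0:
  assumes "finite A" "0 \<notin> A" "S \<subseteq> A"
  shows "prod (absorb0 s S) (insert 0 (A - S)) = prod s (insert 0 A)"
proof -
  have "prod (absorb0 s S) (insert 0 (A - S)) = prod s (insert 0 (A - S) \<union> S)"
    by (subst prod_absorb0) (use assms in \<open>auto intro: finite_subset\<close>)
  also have "insert 0 (A - S) \<union> S = insert 0 A" using assms(3) by auto
  finally show ?thesis .
qed

lemma prod_fun_upd_0_mult:
  assumes "finite A" "0 \<in> A"
  shows "prod (s(0 := c * s 0)) A = c * prod s A"
  using prod.remove[OF assms, of "s(0 := c * s 0)"] prod.remove[OF assms, of s]
  by (simp add: prod.cong[OF refl, of "A - {0}" "s(0 := c * s 0)" s] mult.assoc)

locale theta_family =
  fixes q qh :: complex and s :: "nat \<Rightarrow> complex" and N :: "nat set"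
  assumes norm_q: "norm q < 1" and q_nonzero: "q \<noteq> 0" and qh_sq: "qh\<^sup>2 = q"
    and finite_N: "finite N" and zero_in_N: "0 \<in> N"
    and s_nonzero: "\<And>i. i \<in> N \<Longrightarrow> s i \<noteq> 0"
    and theta_prod_nonzero: "\<And>A. A \<subseteq> N \<Longrightarrow> A \<noteq> {} \<Longrightarrow> theta q (prod s A) \<noteq> 0"
    and theta_qh_prod_nonzero: "\<And>A. A \<subseteq> N \<Longrightarrow> A \<noteq> {} \<Longrightarrow> theta q (qh * prod s A) \<noteq> 0"
begin

lemma Uset_relation_absorb0:
  assumes S: "S \<subseteq> N - {0}" and L: "L \<subseteq> N - S"
  shows "(\<Sum>K\<in>Pow L. (-1) ^ card (L - K) * thetaD q (card (L - K)) (prod (absorb0 s S) K) *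
            Uset q (absorb0 s S) K) = 0"
proof (rule Uset_relation)
  show "finite L" using L finite_N finite_subset by blast
  fix K assume K: "K \<subseteq> L" "K \<noteq> {}"
  have KS: "K \<subseteq> N" "K \<union> S \<subseteq> N" "K \<union> S \<noteq> {}" using K L S by auto
  hence "finite K" "finite S" using finite_N finite_subset by auto
  moreover have "0 \<notin> S" "S \<inter> K = {}" using K L S by auto
  ultimately have "prod (absorb0 s S) K = (if 0 \<in> K then prod s (K \<union> S) else prod s K)"
    by (rule prod_absorb0)
  thus "theta q (\<Prod>i\<in>K. absorb0 s S i) \<noteq> 0"
    using theta_prod_nonzero[OF KS(1) K(2)] theta_prod_nonzero[OF KS(2,3)] by simp
qed

text \<open>Away from \<open>0\<close> the family \<open>absorb0 s S\<close> agrees with \<open>s\<close>, so the part of the relation for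
  \<open>absorb0 s S\<close> on \<open>{0} \<union> L\<close> where \<open>0 \<notin> K\<close> is a sum involving \<open>s\<close> only.\<close>
lemma relation_absorb0_insert_0:
  assumes S: "S \<subseteq> N - {0}" and L: "L \<subseteq> N - S - {0}"
  shows "(\<Sum>K\<in>Pow L. (-1) ^ card (L - K) * thetaD q (card (L - K)) (prod (absorb0 s S) (insert 0 K)) *
            Uset q (absorb0 s S) (insert 0 K)) =
         (\<Sum>K\<in>Pow L. (-1) ^ card (L - K) * thetaD q (Suc (card (L - K))) (prod s K) * Uset q s K)"
proof -
  have fL: "finite L" and fS: "finite S" using L S finite_N finite_subset by blast+
  have "0 \<notin> L" using L by auto
  have "0 = (\<Sum>K\<in>Pow (insert 0 L). (-1) ^ card (insert 0 L - K) *
               thetaD q (card (insert 0 L - K)) (prod (absorb0 s S) K) * Uset q (absorb0 s S) K)"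
    by (rule Uset_relation_absorb0[OF S, symmetric]) (use L S zero_in_N in auto)
  also have "\<dots> = (\<Sum>K\<in>Pow L. (-1) ^ Suc (card (L - K)) *
         thetaD q (Suc (card (L - K))) (prod (absorb0 s S) K) * Uset q (absorb0 s S) K) +
      (\<Sum>K\<in>Pow L. (-1) ^ card (L - K) * thetaD q (card (L - K)) (prod (absorb0 s S) (insert 0 K)) *
         Uset q (absorb0 s S) (insert 0 K))"
    using sum_Pow_insert_complement[OF fL \<open>0 \<notin> L\<close>, of "\<lambda>D K. (-1) ^ card D *
            thetaD q (card D) (prod (absorb0 s S) K) * Uset q (absorb0 s S) K"] fL \<open>0 \<notin> L\<close>
    by simp
  also have "(\<Sum>K\<in>Pow L. (-1) ^ Suc (card (L - K)) *
         thetaD q (Suc (card (L - K))) (prod (absorb0 s S) K) * Uset q (absorb0 s S) K) =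
      - (\<Sum>K\<in>Pow L. (-1) ^ card (L - K) * thetaD q (Suc (card (L - K))) (prod s K) * Uset q s K)"
    unfolding sum_negf[symmetric]
  proof (intro sum.cong refl)
    fix K assume "K \<in> Pow L"
    hence "finite K" "0 \<notin> K" "S \<inter> K = {}" using fL L finite_subset by auto
    moreover have "0 \<notin> S" using S by auto
    ultimately have "prod (absorb0 s S) K = prod s K" "Uset q (absorb0 s S) K = Uset q s K"
      using prod_absorb0[OF _ fS, of K s] by (auto simp: absorb0_def intro!: Uset_cong)
    thus "(-1) ^ Suc (card (L - K)) * thetaD q (Suc (card (L - K))) (prod (absorb0 s S) K) *
            Uset q (absorb0 s S) K =
          - ((-1) ^ card (L - K) * thetaD q (Suc (card (L - K))) (prod s K) * Uset q s K)"
      by simp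
  qed
  finally show ?thesis by (simp add: add_eq_0_iff)
qed

lemma sum_relation_absorb0:
  assumes S: "S \<subseteq> N - {0}" and X: "X \<subseteq> N - S - {0}"
  shows "(\<Sum>K\<in>Pow X. \<Sum>J\<in>Pow (X - K). (-1) ^ card J *
            thetaD q (card J) (prod (absorb0 s S) (insert 0 K)) * Uset q (absorb0 s S) (insert 0 K)) =
         (\<Sum>K\<in>Pow X. \<Sum>J\<in>Pow (X - K). (-1) ^ card J * thetaD q (Suc (card J)) (prod s K) * Uset q s K)"
proof -
  have fX: "finite X" using X finite_N finite_subset by blast
  have "(\<Sum>K\<in>Pow X. \<Sum>J\<in>Pow (X - K). (-1) ^ card J *
            thetaD q (card J) (prod (absorb0 s S) (insert 0 K)) * Uset q (absorb0 s S) (insert 0 K)) =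
        (\<Sum>L\<in>Pow X. \<Sum>K\<in>Pow L. (-1) ^ card (L - K) *
            thetaD q (card (L - K)) (prod (absorb0 s S) (insert 0 K)) * Uset q (absorb0 s S) (insert 0 K))"
    by (rule sum_Pow_split_pairs[OF fX, symmetric])
  also have "\<dots> = (\<Sum>L\<in>Pow X. \<Sum>K\<in>Pow L. (-1) ^ card (L - K) * thetaD q (Suc (card (L - K))) (prod s K) * Uset q s K)"
    by (intro sum.cong refl relation_absorb0_insert_0[OF S]) (use X in auto)
  also have "\<dots> = (\<Sum>K\<in>Pow X. \<Sum>J\<in>Pow (X - K). (-1) ^ card J * thetaD q (Suc (card J)) (prod s K) * Uset q s K)"
    by (rule sum_Pow_split_pairs[OF fX])
  finally show ?thesis .
qed

lemma prod_s_nonzero: "A \<subseteq> N \<Longrightarrow> prod s A \<noteq> 0"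
  by (metis finite_N finite_subset prod_zero_iff s_nonzero subsetD)

lemma Upi_sum_relation:
  assumes I: "I \<subseteq> N" "0 \<in> I"
  shows "(\<Sum>A\<in>Pow (I - {0}). \<Sum>J\<in>Pow (I - {0} - A).
            (-1) ^ card J * thetaD q (card J) (prod s (insert 0 A)) * Upi_sum q s (insert 0 A)) =
         (\<Sum>K\<in>Pow (I - {0}). (-1) ^ card (I - {0} - K) * thetaD q (Suc (card (I - {0} - K))) (prod s K) *
            Uset q s K)"
proof -
  define X where "X = I - {0}"
  define T :: "nat set \<Rightarrow> nat set \<Rightarrow> nat set \<Rightarrow> complex"
    where "T = (\<lambda>S K J. (-1) ^ card J * thetaD q (card J) (prod (absorb0 s S) (insert 0 K)) *
                                 Uset q (absorb0 s S) (insert 0 K))"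
  define M :: "nat set \<Rightarrow> nat set \<Rightarrow> complex"
    where "M = (\<lambda>K J. (-1) ^ card J * thetaD q (Suc (card J)) (prod s K) * Uset q s K)"
  have fX: "finite X" and X: "X \<subseteq> N - {0}" using I finite_N finite_subset by (auto simp: X_def)
  have expand: "(\<Sum>J\<in>Pow (X - A). (-1) ^ card J * thetaD q (card J) (prod s (insert 0 A)) * Upi_sum q s (insert 0 A)) =
                (\<Sum>S\<in>Pow A. (-1) ^ card S * (\<Sum>J\<in>Pow (X - S - (A - S)). T S (A - S) J))"
    if A: "A \<subseteq> X" for A
  proof -
    have "0 \<notin> A" "finite A" using A X fX finite_subset by auto
    moreover have "X - S - (A - S) = X - A" if "S \<subseteq> A" for S using that by auto
    ultimately show ?thesis
      unfolding Upi_sum_insert_0[OF \<open>0 \<notin> A\<close>] T_def sum_distrib_left sum_distrib_right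
      by (subst sum.swap) (auto intro!: sum.cong simp: mult_ac prod_absorb0_insert_0 simp del: prod.insert)
  qed
  have "(\<Sum>A\<in>Pow X. \<Sum>J\<in>Pow (X - A). (-1) ^ card J * thetaD q (card J) (prod s (insert 0 A)) *
            Upi_sum q s (insert 0 A)) =
        (\<Sum>A\<in>Pow X. \<Sum>S\<in>Pow A. (-1) ^ card S * (\<Sum>J\<in>Pow (X - S - (A - S)). T S (A - S) J))"
    by (intro sum.cong refl expand) auto
  also have "\<dots> = (\<Sum>S\<in>Pow X. \<Sum>K\<in>Pow (X - S). (-1) ^ card S * (\<Sum>J\<in>Pow (X - S - K). T S K J))"
    by (rule sum_Pow_split_pairs[OF fX])
  also have "\<dots> = (\<Sum>S\<in>Pow X. \<Sum>K\<in>Pow (X - S). (-1) ^ card S * (\<Sum>J\<in>Pow (X - K - S). M K J))"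
  proof (rule sum.cong[OF refl])
    fix S assume "S \<in> Pow X"
    hence "(\<Sum>K\<in>Pow (X - S). \<Sum>J\<in>Pow (X - S - K). T S K J) =
           (\<Sum>K\<in>Pow (X - S). \<Sum>J\<in>Pow (X - S - K). M K J)"
      unfolding T_def M_def using X by (intro sum_relation_absorb0) auto
    moreover have "X - S - K = X - K - S" for K by auto
    ultimately show "(\<Sum>K\<in>Pow (X - S). (-1) ^ card S * (\<Sum>J\<in>Pow (X - S - K). T S K J)) =
                     (\<Sum>K\<in>Pow (X - S). (-1) ^ card S * (\<Sum>J\<in>Pow (X - K - S). M K J))"
      by (simp add: sum_distrib_left[symmetric])
  qed
  also have "\<dots> = (\<Sum>K\<in>Pow X. \<Sum>S\<in>Pow (X - K). (-1) ^ card S * (\<Sum>J\<in>Pow (X - K - S). M K J))"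
    by (rule sum_Pow_Pow_diff_swap[OF fX])
  also have "\<dots> = (\<Sum>K\<in>Pow X. M K (X - K))"
    using fX by (intro sum.cong refl sum_Pow_alternating_inversion) simp
  finally show ?thesis unfolding X_def M_def .
qed

lemma Uset_shift_relation:
  assumes I: "I \<subseteq> N" "0 \<in> I"
  shows "(\<Sum>A\<in>Pow (I - {0}). (-1) ^ card (I - {0} - A) * thetaD q (card (I - {0} - A)) (qh * prod s (insert 0 A)) *
            Uset q (s(0 := qh * s 0)) (insert 0 A)) =
         (\<Sum>K\<in>Pow (I - {0}). (-1) ^ card (I - {0} - K) * thetaD q (Suc (card (I - {0} - K))) (prod s K) *
            Uset q s K)"
proof -
  define X where "X = I - {0}"
  define s' where "s' = s(0 := qh * s 0)"
  have fX: "finite X" "0 \<notin> X" and I_eq: "I = insert 0 X"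
    using I finite_N finite_subset by (auto simp: X_def)
  have off0: "prod s' K = prod s K" "Uset q s' K = Uset q s K" if "K \<in> Pow X" for K
    using that fX by (auto simp: s'_def intro!: prod.cong Uset_cong)
  have at0: "prod s' (insert 0 K) = qh * prod s (insert 0 K)" if "K \<in> Pow X" for K
    unfolding s'_def using that fX by (intro prod_fun_upd_0_mult) (auto intro: finite_subset)
  have "0 = (\<Sum>A\<in>Pow (insert 0 X). (-1) ^ card (insert 0 X - A) * thetaD q (card (insert 0 X - A)) (prod s' A) *
               Uset q s' A)"
  proof (rule Uset_relation[symmetric])
    show "finite (insert 0 X)" using fX by simp
    fix A assume A: "A \<subseteq> insert 0 X" "A \<noteq> {}"
    hence AN: "A \<subseteq> N" "finite A" using I I_eq fX finite_subset by auto
    show "theta q (\<Prod>i\<in>A. s' i) \<noteq> 0"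
    proof (cases "0 \<in> A")
      case True
      thus ?thesis using prod_fun_upd_0_mult[OF AN(2) True, of s qh] theta_qh_prod_nonzero[OF AN(1) A(2)]
        by (simp add: s'_def)
    next
      case False
      hence "prod s' A = prod s A" by (auto simp: s'_def intro!: prod.cong)
      thus ?thesis using theta_prod_nonzero[OF AN(1) A(2)] by simp
    qed
  qed
  also have "\<dots> = (\<Sum>K\<in>Pow X. (-1) ^ Suc (card (X - K)) * thetaD q (Suc (card (X - K))) (prod s' K) * Uset q s' K) +
      (\<Sum>K\<in>Pow X. (-1) ^ card (X - K) * thetaD q (card (X - K)) (prod s' (insert 0 K)) * Uset q s' (insert 0 K))"
    using sum_Pow_insert_complement[OF fX, of "\<lambda>D K. (-1) ^ card D * thetaD q (card D) (prod s' K) * Uset q s' K"] fX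
    by simp
  also have "\<dots> = - (\<Sum>K\<in>Pow X. (-1) ^ card (X - K) * thetaD q (Suc (card (X - K))) (prod s K) * Uset q s K) +
      (\<Sum>K\<in>Pow X. (-1) ^ card (X - K) * thetaD q (card (X - K)) (qh * prod s (insert 0 K)) * Uset q s' (insert 0 K))"
    unfolding sum_negf[symmetric] by (intro arg_cong2[where f = "(+)"] sum.cong refl) (simp_all add: off0 at0)
  finally show ?thesis unfolding X_def s'_def by (simp add: add_eq_0_iff)
qed

lemma shifted_defect_relation:
  assumes I: "I \<subseteq> N" "0 \<in> I"
  shows "(\<Sum>A\<in>Pow (I - {0}). (-1) ^ card (I - {0} - A) * thetaD q (card (I - {0} - A)) (qh * prod s (insert 0 A)) *
            (Uset q (s(0 := qh * s 0)) (insert 0 A) + qh * (prod s (insert 0 A))\<^sup>2 * Upi_sum q s (insert 0 A))) = 0"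
proof -
  let ?c = "\<lambda>A. (-1) ^ card (I - {0} - A) * thetaD q (card (I - {0} - A)) (qh * prod s (insert 0 A))"
  have quasi: "(\<Sum>A\<in>Pow (I - {0}). ?c A * (- (qh * (prod s (insert 0 A))\<^sup>2) * Upi_sum q s (insert 0 A))) =
        (\<Sum>A\<in>Pow (I - {0}). \<Sum>J\<in>Pow (I - {0} - A).
            (-1) ^ card J * thetaD q (card J) (prod s (insert 0 A)) * Upi_sum q s (insert 0 A))"
  proof (intro sum.cong refl thetaD_quasi_periodic_sum[OF norm_q q_nonzero qh_sq])
    fix A assume "A \<in> Pow (I - {0})"
    moreover have "finite I" using I finite_N finite_subset by blast
    ultimately show "finite (I - {0} - A)" "prod s (insert 0 A) \<noteq> 0"
      using I by (auto intro!: prod_s_nonzero)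
  qed
  have "(\<Sum>A\<in>Pow (I - {0}). ?c A * (qh * (prod s (insert 0 A))\<^sup>2 * Upi_sum q s (insert 0 A))) =
        - (\<Sum>A\<in>Pow (I - {0}). ?c A * (- (qh * (prod s (insert 0 A))\<^sup>2) * Upi_sum q s (insert 0 A)))"
    by (simp add: sum_negf[symmetric])
  also have "\<dots> = - (\<Sum>K\<in>Pow (I - {0}). (-1) ^ card (I - {0} - K) * thetaD q (Suc (card (I - {0} - K))) (prod s K) *
            Uset q s K)"
    unfolding quasi Upi_sum_relation[OF I] ..
  finally have "(\<Sum>A\<in>Pow (I - {0}). ?c A * (qh * (prod s (insert 0 A))\<^sup>2 * Upi_sum q s (insert 0 A))) =
        - (\<Sum>A\<in>Pow (I - {0}). ?c A * Uset q (s(0 := qh * s 0)) (insert 0 A))"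
    unfolding Uset_shift_relation[OF I] .
  thus ?thesis
    by (simp add: distrib_left sum.distrib)
qed

lemma Uset_shift_eq:
  assumes "I \<subseteq> N" "0 \<in> I"
  shows "Uset q (s(0 := qh * s 0)) I = - qh * (prod s I)\<^sup>2 * Upi_sum q s I"
  using assms
proof (induction "card I" arbitrary: I rule: less_induct)
  case less
  define X where "X = I - {0}"
  define D where "D A = Uset q (s(0 := qh * s 0)) (insert 0 A) + qh * (prod s (insert 0 A))\<^sup>2 * Upi_sum q s (insert 0 A)"
    for A
  let ?c = "\<lambda>A. (-1) ^ card (X - A) * thetaD q (card (X - A)) (qh * prod s (insert 0 A))"
  have fX: "finite X" using less.prems finite_N finite_subset by (auto simp: X_def)
  have I_eq: "insert 0 X = I" using less.prems by (auto simp: X_def)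
  have D_proper: "D A = 0" if "A \<in> Pow X - {X}" for A
  proof -
    have "insert 0 A \<subset> I" using that I_eq by (auto simp: X_def)
    hence "card (insert 0 A) < card I" "insert 0 A \<subseteq> N"
      using less.prems finite_subset[OF _ finite_N] by (auto intro: psubset_card_mono)
    from less.hyps[OF this] show ?thesis by (simp add: D_def)
  qed
  have "0 = (\<Sum>A\<in>Pow X. ?c A * D A)"
    unfolding D_def X_def by (rule shifted_defect_relation[OF less.prems, symmetric])
  also have "\<dots> = ?c X * D X + (\<Sum>A\<in>Pow X - {X}. ?c A * D A)"
    by (rule sum.remove) (use fX in auto)
  also have "(\<Sum>A\<in>Pow X - {X}. ?c A * D A) = 0"
    by (rule sum.neutral) (simp add: D_proper)
  also have "?c X = theta q (qh * prod s I)"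
    using I_eq by simp
  finally have "D X = 0"
    using theta_qh_prod_nonzero[OF less.prems(1)] less.prems(2) by auto
  thus ?case unfolding D_def I_eq by (simp add: add_eq_0_iff2)
qed

end

section \<open>Partitions with one non-singleton block\<close>

definition block_partition :: "nat \<Rightarrow> nat set \<Rightarrow> nat set set" where
  "block_partition n S = insert (insert 0 S) ((\<lambda>i. {i}) ` ({..<n} - insert 0 S))"

definition rest_of_block0 :: "nat set set \<Rightarrow> nat set" where
  "rest_of_block0 P = \<Union>{B \<in> P. 0 \<in> B} - {0}"

lemma block_partition_in_Pi0:
  assumes "n \<ge> 1" "S \<subseteq> {..<n} - {0}"
  shows "block_partition n S \<in> Pi0 n"
proof -
  let ?R = "{..<n} - insert 0 S"
  have "partition_on ?R ((\<lambda>i. {i}) ` ?R)" by (rule partition_on_singletons)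
  moreover have "disjnt (insert 0 S) (\<Union>((\<lambda>i. {i}) ` ?R))" by (auto simp: disjnt_def)
  moreover have "insert 0 S \<subseteq> {..<n}" using assms by auto
  ultimately have "partition_on {..<n} (block_partition n S)"
    unfolding block_partition_def by (simp add: partition_on_insert)
  moreover have "B = insert 0 S" if "B \<in> block_partition n S" "card B > 1" for B
    using that by (auto simp: block_partition_def)
  ultimately show ?thesis unfolding Pi0_def by blast
qed

lemma rest_of_block0_block_partition:
  assumes "S \<subseteq> {..<n} - {0}"
  shows "rest_of_block0 (block_partition n S) = S"
proof -
  have "{B \<in> block_partition n S. 0 \<in> B} = {insert 0 S}" by (auto simp: block_partition_def)
  thus ?thesis using assms by (auto simp: rest_of_block0_def)
qed

lemma Pi0_block0:
  assumes n: "n \<ge> 1" and P: "P \<in> Pi0 n"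
  shows "\<exists>B0\<in>P. 0 \<in> B0 \<and> (\<forall>B\<in>P. 0 \<in> B \<longrightarrow> B = B0) \<and> (\<forall>B\<in>P. 0 \<notin> B \<longrightarrow> (\<exists>i. B = {i}))"
proof -
  have part: "partition_on {..<n} P" and big: "\<And>B. B \<in> P \<Longrightarrow> card B > 1 \<Longrightarrow> 0 \<in> B"
    using P by (auto simp: Pi0_def)
  obtain B0 where B0: "B0 \<in> P" "0 \<in> B0"
  proof -
    have "0 \<in> \<Union>P" using partition_onD1[OF part] n by auto
    thus ?thesis using that by blast
  qed
  moreover have "B = B0" if "B \<in> P" "0 \<in> B" for B
    using partition_onD2[OF part] that B0 by (auto simp: disjoint_def)
  moreover have "\<exists>i. B = {i}" if B: "B \<in> P" "0 \<notin> B" for B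
  proof -
    have "B \<subseteq> {..<n}" using B(1) partition_onD1[OF part] by blast
    hence "finite B" using finite_subset by blast
    moreover have "B \<noteq> {}" using B(1) partition_onD3[OF part] by auto
    ultimately have "card B > 0" by (simp add: card_gt_0_iff)
    moreover have "\<not> card B > 1" using big B by blast
    ultimately have "card B = 1" by linarith
    thus ?thesis by (rule card_1_singletonE) blast
  qed
  ultimately show ?thesis by blast
qed

lemma block_partition_rest_of_block0:
  assumes n: "n \<ge> 1" and P: "P \<in> Pi0 n"
  shows "rest_of_block0 P \<subseteq> {..<n} - {0}" "block_partition n (rest_of_block0 P) = P"
proof -
  obtain B0 where B0: "B0 \<in> P" "0 \<in> B0" and uniq: "\<And>B. B \<in> P \<Longrightarrow> 0 \<in> B \<Longrightarrow> B = B0"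
    and single: "\<And>B. B \<in> P \<Longrightarrow> 0 \<notin> B \<Longrightarrow> \<exists>i. B = {i}"
    using Pi0_block0[OF assms] by auto
  have part: "partition_on {..<n} P" using P by (simp add: Pi0_def)
  hence U: "\<Union>P = {..<n}" by (rule partition_onD1[symmetric])
  have "{B \<in> P. 0 \<in> B} = {B0}" using uniq B0 by blast
  hence rest: "rest_of_block0 P = B0 - {0}" by (simp add: rest_of_block0_def)
  hence ins: "insert 0 (rest_of_block0 P) = B0" using B0 by auto
  show "rest_of_block0 P \<subseteq> {..<n} - {0}" using rest B0(1) U by blast
  have "(\<lambda>i. {i}) ` ({..<n} - B0) \<subseteq> P"
  proof
    fix C assume "C \<in> (\<lambda>i. {i}) ` ({..<n} - B0)"
    then obtain i where i: "i < n" "i \<notin> B0" "C = {i}" by blast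
    then obtain C' where C': "C' \<in> P" "i \<in> C'" using U by (metis UnionE lessThan_iff)
    hence "0 \<notin> C'" using uniq i by blast
    then obtain j where "C' = {j}" using single[OF C'(1)] by blast
    thus "C \<in> P" using C' i by simp
  qed
  moreover have "B \<in> insert B0 ((\<lambda>i. {i}) ` ({..<n} - B0))" if B: "B \<in> P" for B
  proof (cases "0 \<in> B")
    case False
    then obtain i where i: "B = {i}" using single[OF B] by blast
    hence "i < n" using B U by auto
    moreover have "B \<inter> B0 = {}"
      using disjointD[OF partition_onD2[OF part] B B0(1)] False B0(2) by blast
    hence "i \<notin> B0" using i by blast
    ultimately show ?thesis using i by blast
  next
    case True
    thus ?thesis using uniq[OF B] by simp
  qed
  ultimately show "block_partition n (rest_of_block0 P) = P"
    unfolding block_partition_def ins using B0(1) by (intro equalityI) (simp, blast)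
qed

lemma card_block_partition:
  assumes "n \<ge> 1" "S \<subseteq> {..<n} - {0}"
  shows "card (block_partition n S) + card S = n"
proof -
  have fS: "finite S" and sub: "insert 0 S \<subseteq> {..<n}" and "0 \<notin> S"
    using assms finite_subset by auto
  have "card ((\<lambda>i. {i}) ` ({..<n} - insert 0 S)) = n - Suc (card S)"
    using sub fS \<open>0 \<notin> S\<close> by (subst card_image) (auto simp: inj_on_def card_Diff_subset)
  moreover have "Suc (card S) \<le> n"
    using card_mono[OF _ sub] fS \<open>0 \<notin> S\<close> by simp
  ultimately show ?thesis
    unfolding block_partition_def by (subst card_insert_disjoint) auto
qed

lemma Upi_block_partition:
  assumes "n \<ge> 1" "S \<subseteq> {..<n} - {0}"
  shows "Upi q (block_partition n S) s = Uset q (absorb0 s S) ({..<n} - S)"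
proof -
  have fS: "finite S" and "0 \<notin> S" using assms finite_subset by auto
  have Min0: "Min (insert 0 S) = (0::nat)" by (rule Min_eqI) (use fS in auto)
  have Mins: "Min ` block_partition n S = {..<n} - S"
    using assms by (auto simp: block_partition_def image_image Min0)
  have block: "(THE B. B \<in> block_partition n S \<and> Min B = m) = (if m = 0 then insert 0 S else {m})"
    if m: "m \<in> {..<n} - S" for m
  proof (rule the_equality)
    show "(if m = 0 then insert 0 S else {m}) \<in> block_partition n S \<and> Min (if m = 0 then insert 0 S else {m}) = m"
      using m Min0 by (auto simp: block_partition_def)
    fix B assume "B \<in> block_partition n S \<and> Min B = m"
    thus "B = (if m = 0 then insert 0 S else {m})"
      using Min0 by (auto simp: block_partition_def)
  qed
  have "(\<Prod>k\<in>(THE B. B \<in> block_partition n S \<and> Min B = m). s k) = absorb0 s S m"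
    if "m \<in> {..<n} - S" for m
    using block[OF that] fS \<open>0 \<notin> S\<close> by (simp add: absorb0_def)
  hence "Upi q (block_partition n S) s = U q (map (absorb0 s S) (sorted_list_of_set ({..<n} - S)))"
    unfolding Upi_def Mins by (intro arg_cong[where f = "U q"] map_cong) simp_all
  also have "\<dots> = Uset q (absorb0 s S) ({..<n} - S)"
    by (simp add: U_map_distinct_eq_Uset)
  finally show ?thesis .
qed

lemma sum_Pi0_eq_Upi_sum:
  assumes n: "n \<ge> 1"
  shows "(\<Sum>P\<in>Pi0 n. (-1) ^ (n + card P) * Upi q P s) = Upi_sum q s {..<n}"
  unfolding Upi_sum_def
proof (rule sum.reindex_bij_witness[where i = "block_partition n" and j = rest_of_block0])
  fix P assume P: "P \<in> Pi0 n"
  let ?S = "rest_of_block0 P"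
  have S: "?S \<subseteq> {..<n} - {0}" and P_eq: "block_partition n ?S = P"
    using block_partition_rest_of_block0[OF n P] by auto
  thus "?S \<in> Pow ({..<n} - {0})" "block_partition n ?S = P" by auto
  have "n + card P = 2 * card P + card ?S"
    using card_block_partition[OF n S] P_eq by simp
  hence "(-1) ^ (n + card P) = ((-1) ^ card ?S :: complex)"
    by (simp add: power_add power_mult)
  thus "(-1) ^ card ?S * Uset q (absorb0 s ?S) ({..<n} - ?S) = (-1) ^ (n + card P) * Upi q P s"
    using Upi_block_partition[OF n S, of q s] P_eq by simp
next
  fix S assume "S \<in> Pow ({..<n} - {0})"
  thus "rest_of_block0 (block_partition n S) = S" "block_partition n S \<in> Pi0 n"
    using rest_of_block0_block_partition block_partition_in_Pi0[OF n] by auto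
qed

theorem corollary10p3:
  fixes q qh :: complex and n :: nat and s :: "nat \<Rightarrow> complex"
  assumes "q \<noteq> 0" and "norm q < 1" and "qh\<^sup>2 = q"
    and "n \<ge> 1"
    and "\<forall>i<n. s i \<noteq> 0"
    and "\<forall>S. S \<subseteq> {..<n} \<and> S \<noteq> {} \<longrightarrow>
           theta q (\<Prod>k\<in>S. s k) \<noteq> 0 \<and> theta q (qh * (\<Prod>k\<in>S. s k)) \<noteq> 0"
  shows "U q (map (\<lambda>i. if i = 0 then qh * s i else s i) [0..<n]) =
         - qh * (\<Prod>i<n. (s i)\<^sup>2) *
           (\<Sum>P\<in>Pi0 n. (-1) ^ (n + card P) * Upi q P s)"
proof -
  interpret theta_family q qh s "{..<n}"
    using assms by unfold_locales auto
  have "U q (map (\<lambda>i. if i = 0 then qh * s i else s i) [0..<n]) =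
        Uset q (\<lambda>i. if i = 0 then qh * s i else s i) {..<n}"
    by (simp add: U_map_distinct_eq_Uset atLeast0LessThan)
  also have "\<dots> = Uset q (s(0 := qh * s 0)) {..<n}"
    by (rule Uset_cong) simp
  also have "\<dots> = - qh * (prod s {..<n})\<^sup>2 * Upi_sum q s {..<n}"
    by (rule Uset_shift_eq) (use assms(4) in auto)
  also have "\<dots> = - qh * (\<Prod>i<n. (s i)\<^sup>2) * (\<Sum>P\<in>Pi0 n. (-1) ^ (n + card P) * Upi q P s)"
    by (simp add: sum_Pi0_eq_Upi_sum[OF assms(4)] prod_power_distrib)
  finally show ?thesis .
qed

end
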